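(* Let $X$ be a vector space, let $0<\beta\le1$, and let $Y$ be a $\beta$-homogeneous complex Banach space with $F$-norm $\|\cdot\|$. Let $\varepsilon>0$ and let $\phi: X\to Y$ be a mapping with $\phi(0)=0$ and $$\big\|\phi(x+y-z)+\phi(x+z-y)+\phi(y+z-x)-\phi(x-y)-\phi(x-z)-\phi(z-y)-\phi(x)-\phi(y)-\phi(z)\big\|\le\varepsilon$$ for all $x,y,z\in X$. Then there exists a unique quadratic mapping $h: X\to Y$ such that $$\|\phi(x)-h(x)\|\le\frac{\varepsilon}{4^\beta-1}\quad\text{for all }x\in X.$$
   Context: An $F$-norm on a complex linear space $Y$ is a map $\|\cdot\|: Y\to[0,\infty)$ such that: $\|u\|=0$ iff $u=0$; $\|\lambda u\|=\|u\|$ whenever $|\lambda|=1$; $\|u+v\|\le\|u\|+\|v\|$; $\|\lambda_n u\|\to0$ implies $\lambda_n\to0$; $\|\lambda u_n\|\to 0$ implies $u_n\to0$. With $d(u,v)=\|u-v\|$, $Y$ is an $F$-space if $d$ is complete. The $F$-norm is $\beta$-homogeneous ($\beta>0$) if $\|\lambda u\|=|\lambda|^\beta\|u\|$ for all $u\in Y$, $\lambda\in\mathbb{C}$; a $\beta$-homogeneous Banach space is a $\beta$-homogeneous $F$-space. A mapping $h: X\to Y$ is quadratic if $h(x+y)+h(x-y)=2h(x)+2h(y)$ for all $x,y\in X$. *)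

theory Defs
  imports "HOL-Analysis.Analysis"
begin

text \<open>A complex linear space is modelled as a type 'b of class ab_group_add together
  with a complex scalar multiplication smul satisfying the module axioms
  (locale module from HOL.Modules).

  The two "limit"
  axioms are read with the non-degeneracy side conditions u \<noteq> 0 and
  c \<noteq> 0 (otherwise they are unsatisfiable); convergence u_n to 0 is in
  the metric d(u,v) = nrm (u - v).\<close>

definition F_norm :: "(complex \<Rightarrow> 'b::ab_group_add \<Rightarrow> 'b) \<Rightarrow> ('b \<Rightarrow> real) \<Rightarrow> bool" where
  "F_norm smul nrm \<longleftrightarrow>
     (\<forall>u. nrm u \<ge> 0) \<and>
     (\<forall>u. nrm u = 0 \<longleftrightarrow> u = 0) \<and>
     (\<forall>c u. cmod c = 1 \<longrightarrow> nrm (smul c u) = nrm u) \<and>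
     (\<forall>u v. nrm (u + v) \<le> nrm u + nrm v) \<and>
     (\<forall>(c::nat \<Rightarrow> complex) u. u \<noteq> 0 \<longrightarrow>
          (\<lambda>n. nrm (smul (c n) u)) \<longlonglongrightarrow> 0 \<longrightarrow> c \<longlonglongrightarrow> 0) \<and>
     (\<forall>(c::complex) (u::nat \<Rightarrow> 'b). c \<noteq> 0 \<longrightarrow>
          (\<lambda>n. nrm (smul c (u n))) \<longlonglongrightarrow> 0 \<longrightarrow> (\<lambda>n. nrm (u n)) \<longlonglongrightarrow> 0)"

definition F_complete :: "('b::ab_group_add \<Rightarrow> real) \<Rightarrow> bool" where
  "F_complete nrm \<longleftrightarrow>
     (\<forall>u::nat \<Rightarrow> 'b. (\<forall>e>0. \<exists>N. \<forall>m\<ge>N. \<forall>n\<ge>N. nrm (u m - u n) < e) \<longrightarrow>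
        (\<exists>l. (\<lambda>n. nrm (u n - l)) \<longlonglongrightarrow> 0))"

definition beta_homogeneous ::
  "real \<Rightarrow> (complex \<Rightarrow> 'b::ab_group_add \<Rightarrow> 'b) \<Rightarrow> ('b \<Rightarrow> real) \<Rightarrow> bool" where
  "beta_homogeneous \<beta> smul nrm \<longleftrightarrow> (\<forall>c u. nrm (smul c u) = cmod c powr \<beta> * nrm u)"

definition beta_homogeneous_Banach ::
  "real \<Rightarrow> (complex \<Rightarrow> 'b::ab_group_add \<Rightarrow> 'b) \<Rightarrow> ('b \<Rightarrow> real) \<Rightarrow> bool" where
  "beta_homogeneous_Banach \<beta> smul nrm \<longleftrightarrow>
     module smul \<and> F_norm smul nrm \<and> F_complete nrm \<and> beta_homogeneous \<beta> smul nrm"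

definition quadratic_map ::
  "(complex \<Rightarrow> 'b::ab_group_add \<Rightarrow> 'b) \<Rightarrow> ('a::ab_group_add \<Rightarrow> 'b) \<Rightarrow> bool" where
  "quadratic_map smul h \<longleftrightarrow>
     (\<forall>x y. h (x + y) + h (x - y) = smul 2 (h x) + smul 2 (h y))"

end

theory Submission
  imports Defs
begin

text \<open>Setting \<open>y = 0, z = x\<close> in the hypothesis bounds the doubling defect
  \<open>\<phi>(2x) - 4\<phi>(x)\<close> by \<open>\<epsilon>\<close>, and three instances of it bound the quadratic defect
  \<open>\<phi>(x+y) + \<phi>(x-y) - 2\<phi>(x) - 2\<phi>(y)\<close> by \<open>3\<epsilon>\<close>.  With \<open>q = 4^\<beta> > 1\<close>,
  \<open>\<beta>\<close>-homogeneity makes consecutive terms of Hyers' sequence \<open>4^-n \<phi>(2^n x)\<close> differ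
  by at most \<open>\<epsilon>/q^(n+1)\<close>, so the sequence is Cauchy; its limit \<open>h\<close> lies within
  \<open>\<epsilon>/(q - 1)\<close> of \<open>\<phi>\<close>, and the quadratic defect of \<open>h\<close> is at most
  \<open>3\<epsilon>/q^n\<close> for every \<open>n\<close>, hence zero.  A quadratic map satisfies
  \<open>h(x) = 4^-n h(2^n x)\<close>, so two quadratic maps at bounded distance \<open>B\<close> are within
  \<open>B/q^n\<close> of each other for every \<open>n\<close>, which gives uniqueness.\<close>

lemma le_of_le_add_null_seq:
  fixes c B :: real
  assumes "\<And>n. c \<le> B + t n" and "t \<longlonglongrightarrow> 0"
  shows "c \<le> B"
proof -
  have "(\<lambda>n. B + t n) \<longlonglongrightarrow> B + 0" by (intro tendsto_intros assms(2))
  then show ?thesis using assms(1) by (intro LIMSEQ_le_const) auto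
qed

locale beta_Banach =
  fixes smul :: "complex \<Rightarrow> 'b::ab_group_add \<Rightarrow> 'b" and nrm :: "'b \<Rightarrow> real" and \<beta> :: real
  assumes Banach: "beta_homogeneous_Banach \<beta> smul nrm" and beta_pos: "0 < \<beta>"
begin

sublocale M: module smul
  using Banach unfolding beta_homogeneous_Banach_def by auto

lemma nrm_nonneg: "nrm u \<ge> 0"
  using Banach unfolding beta_homogeneous_Banach_def F_norm_def by auto

lemma nrm_eq_0_iff: "nrm u = 0 \<longleftrightarrow> u = 0"
  using Banach unfolding beta_homogeneous_Banach_def F_norm_def by auto

lemma nrm_triangle: "nrm (u + v) \<le> nrm u + nrm v"
  using Banach unfolding beta_homogeneous_Banach_def F_norm_def by auto

lemma nrm_smul: "nrm (smul c u) = cmod c powr \<beta> * nrm u"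
  using Banach unfolding beta_homogeneous_Banach_def beta_homogeneous_def by auto

lemma nrm_complete:
  "\<forall>e>0. \<exists>N. \<forall>m\<ge>N. \<forall>n\<ge>N. nrm (u m - u n) < e \<Longrightarrow> \<exists>l. (\<lambda>n. nrm (u n - l)) \<longlonglongrightarrow> 0"
  using Banach unfolding beta_homogeneous_Banach_def F_complete_def by auto

lemma nrm_minus: "nrm (- u) = nrm u"
  using nrm_smul[of "-1" u] M.scale_minus_left[of 1 u] by simp

lemma nrm_minus_commute: "nrm (u - v) = nrm (v - u)"
  using nrm_minus[of "u - v"] by simp

lemma nrm_triangle_diff: "nrm (u - w) \<le> nrm (u - v) + nrm (v - w)"
  using nrm_triangle[of "u - v" "v - w"] by simp

lemma eq_zero_if_nrm_le_null_seq:
  assumes "\<And>n. nrm u \<le> t n" and "t \<longlonglongrightarrow> 0"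
  shows "u = 0"
proof -
  have "nrm u \<le> 0" using assms by (intro le_of_le_add_null_seq[of _ 0 t]) auto
  then show ?thesis using nrm_nonneg[of u] nrm_eq_0_iff[of u] by linarith
qed

lemma smul_two: "smul 2 u = u + u"
  using M.scale_left_distrib[of 1 1 u] by simp

lemma smul_four: "smul 4 u = u + u + u + u"
  using M.scale_left_distrib[of 2 2 u] by (simp add: smul_two)

definition q :: real where "q = 4 powr \<beta>"

lemma q_gt_1: "q > 1"
  unfolding q_def using beta_pos by simp

lemma nrm_smul_inverse_pow4: "nrm (smul (1 / 4 ^ n) u) = nrm u / q ^ n"
proof -
  have "cmod (1 / 4 ^ n :: complex) = 1 / 4 ^ n" by (simp add: norm_divide norm_power)
  moreover have "((1::real) / 4 ^ n) powr \<beta> = 1 / q ^ n"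
    unfolding q_def by (simp add: powr_divide powr_realpow[symmetric] powr_powr mult.commute)
  ultimately show ?thesis by (simp add: nrm_smul)
qed

lemma divide_q_pow_tendsto_0: "(\<lambda>n. c / q ^ n) \<longlonglongrightarrow> 0"
proof -
  have "(\<lambda>n. c * inverse (q ^ n)) \<longlonglongrightarrow> c * 0"
    by (intro tendsto_intros LIMSEQ_inverse_realpow_zero q_gt_1)
  then show ?thesis by (simp add: divide_inverse)
qed

lemma quadratic_map_double:
  fixes h :: "'a::real_vector \<Rightarrow> 'b"
  assumes "quadratic_map smul h"
  shows "h (2 *\<^sub>R x) = smul 4 (h x)"
proof -
  have quad: "\<And>x y. h (x + y) + h (x - y) = smul 2 (h x) + smul 2 (h y)"
    using assms unfolding quadratic_map_def by auto
  have "h 0 + h 0 = (h 0 + h 0) + (h 0 + h 0)"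
    using quad[of 0 0] by (simp add: smul_two)
  then have "smul (1/2) (smul 2 (h 0)) = 0"
    by (simp add: smul_two)
  then have "h 0 = 0" by simp
  then show ?thesis
    using quad[of x x] by (simp add: smul_two smul_four scaleR_2 add.assoc)
qed

lemma quadratic_map_pow2:
  fixes h :: "'a::real_vector \<Rightarrow> 'b"
  assumes "quadratic_map smul h"
  shows "h x = smul (1 / 4 ^ n) (h ((2 ^ n) *\<^sub>R x))"
proof (induction n)
  case (Suc n)
  have "h ((2 ^ Suc n) *\<^sub>R x) = smul 4 (h ((2 ^ n) *\<^sub>R x))"
    using quadratic_map_double[OF assms, of "(2 ^ n) *\<^sub>R x"] by (simp add: mult.commute)
  then show ?case using Suc by simp
qed simp

lemma quadratic_map_bounded_diff_eq:
  fixes h1 h2 :: "'a::real_vector \<Rightarrow> 'b"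
  assumes "quadratic_map smul h1" "quadratic_map smul h2"
    and bounded: "\<And>x. nrm (h1 x - h2 x) \<le> B"
  shows "h1 = h2"
proof
  fix x
  have "nrm (h1 x - h2 x) \<le> B / q ^ n" for n
  proof -
    let ?y = "(2 ^ n) *\<^sub>R x"
    have "h1 x - h2 x = smul (1 / 4 ^ n) (h1 ?y - h2 ?y)"
      using quadratic_map_pow2[OF assms(1)] quadratic_map_pow2[OF assms(2)]
      by (simp add: M.scale_right_diff_distrib)
    then show ?thesis
      using bounded[of ?y] q_gt_1 by (simp add: nrm_smul_inverse_pow4 divide_right_mono)
  qed
  then have "h1 x - h2 x = 0"
    by (rule eq_zero_if_nrm_le_null_seq[OF _ divide_q_pow_tendsto_0])
  then show "h1 x = h2 x" by simp
qed

subsection \<open>The Hyers sequence of a map with bounded doubling defect\<close>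

definition hyers_seq :: "('a::real_vector \<Rightarrow> 'b) \<Rightarrow> nat \<Rightarrow> 'a \<Rightarrow> 'b" where
  "hyers_seq \<phi> n x = smul (1 / 4 ^ n) (\<phi> ((2 ^ n) *\<^sub>R x))"

definition hyers_limit :: "('a::real_vector \<Rightarrow> 'b) \<Rightarrow> 'a \<Rightarrow> 'b" where
  "hyers_limit \<phi> x = (SOME l. (\<lambda>n. nrm (hyers_seq \<phi> n x - l)) \<longlonglongrightarrow> 0)"

lemma hyers_seq_0 [simp]: "hyers_seq \<phi> 0 x = \<phi> x"
  unfolding hyers_seq_def by simp

context
  fixes \<phi> :: "'a::real_vector \<Rightarrow> 'b" and \<delta> :: real
  assumes doubling: "\<And>x. nrm (\<phi> (2 *\<^sub>R x) - smul 4 (\<phi> x)) \<le> \<delta>"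
begin

lemma delta_nonneg: "\<delta> \<ge> 0"
  using doubling[of 0] nrm_nonneg[of "\<phi> (2 *\<^sub>R 0) - smul 4 (\<phi> 0)"] by linarith

lemma hyers_seq_step: "nrm (hyers_seq \<phi> n x - hyers_seq \<phi> (Suc n) x) \<le> \<delta> / q ^ Suc n"
proof -
  let ?y = "(2 ^ n) *\<^sub>R x"
  have "hyers_seq \<phi> n x - hyers_seq \<phi> (Suc n) x
      = smul (1 / 4 ^ Suc n) (smul 4 (\<phi> ?y) - \<phi> (2 *\<^sub>R ?y))"
    unfolding hyers_seq_def by (simp add: M.scale_right_diff_distrib mult.commute)
  then have "nrm (hyers_seq \<phi> n x - hyers_seq \<phi> (Suc n) x)
      = nrm (\<phi> (2 *\<^sub>R ?y) - smul 4 (\<phi> ?y)) / q ^ Suc n"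
    by (simp only: nrm_smul_inverse_pow4 nrm_minus_commute[of "smul 4 _"])
  then show ?thesis
    using doubling[of ?y] q_gt_1 by (simp add: divide_right_mono)
qed

lemma hyers_seq_telescope:
  "nrm (hyers_seq \<phi> n x - hyers_seq \<phi> (n + k) x) \<le> \<delta> * (1 / q ^ n - 1 / q ^ (n + k)) / (q - 1)"
proof (induction k)
  case 0
  then show ?case using nrm_eq_0_iff[of 0] by simp
next
  case (Suc k)
  have shift: "\<delta> * (A - B) / (q - 1) + \<delta> * B / q = \<delta> * (A - B / q) / (q - 1)" for A B
    using q_gt_1 by (simp add: field_simps)
  have "nrm (hyers_seq \<phi> n x - hyers_seq \<phi> (n + Suc k) x)
      \<le> nrm (hyers_seq \<phi> n x - hyers_seq \<phi> (n + k) x)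
        + nrm (hyers_seq \<phi> (n + k) x - hyers_seq \<phi> (Suc (n + k)) x)"
    using nrm_triangle_diff by simp
  also have "\<dots> \<le> \<delta> * (1 / q ^ n - 1 / q ^ (n + k)) / (q - 1) + \<delta> / q ^ Suc (n + k)"
    using Suc hyers_seq_step by (rule add_mono)
  also have "\<dots> = \<delta> * (1 / q ^ n - 1 / q ^ (n + k)) / (q - 1) + \<delta> * (1 / q ^ (n + k)) / q"
    by (simp add: mult.commute)
  also have "\<dots> = \<delta> * (1 / q ^ n - 1 / q ^ (n + k) / q) / (q - 1)"
    by (rule shift)
  also have "\<dots> = \<delta> * (1 / q ^ n - 1 / q ^ (n + Suc k)) / (q - 1)"
    by (simp add: mult.commute)
  finally show ?case .
qed

lemma hyers_seq_dist:
  assumes "n \<le> m"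
  shows "nrm (hyers_seq \<phi> n x - hyers_seq \<phi> m x) \<le> \<delta> / (q ^ n * (q - 1))"
proof -
  obtain k where m: "m = n + k" using assms le_Suc_ex by blast
  have "1 / q ^ n - 1 / q ^ (n + k) \<le> 1 / q ^ n"
    using q_gt_1 by simp
  then have "\<delta> * (1 / q ^ n - 1 / q ^ (n + k)) / (q - 1) \<le> \<delta> * (1 / q ^ n) / (q - 1)"
    using delta_nonneg q_gt_1 by (intro divide_right_mono mult_left_mono) simp_all
  then show ?thesis using hyers_seq_telescope[of n x k] m by simp
qed

lemma hyers_seq_Cauchy:
  "\<forall>e>0. \<exists>N. \<forall>m\<ge>N. \<forall>n\<ge>N. nrm (hyers_seq \<phi> m x - hyers_seq \<phi> n x) < e"
proof (intro allI impI)
  fix e :: real assume "e > 0"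
  obtain N where "\<forall>n\<ge>N. norm (\<delta> / (q - 1) / q ^ n - 0) < e"
    using LIMSEQ_D[OF divide_q_pow_tendsto_0 \<open>e > 0\<close>] by blast
  then have N: "\<delta> / (q - 1) / q ^ N < e"
    by (metis le_refl abs_less_iff real_norm_def diff_zero)
  have close: "nrm (hyers_seq \<phi> m x - hyers_seq \<phi> n x) < e" if "N \<le> m" "m \<le> n" for m n
  proof -
    have "q ^ N \<le> q ^ m"
      using q_gt_1 that(1) by (simp add: power_increasing)
    then have "\<delta> / (q - 1) / q ^ m \<le> \<delta> / (q - 1) / q ^ N"
      using delta_nonneg q_gt_1 by (intro divide_left_mono) simp_all
    then show ?thesis
      using hyers_seq_dist[OF that(2), of x] N by (simp add: mult.commute)
  qed
  show "\<exists>N. \<forall>m\<ge>N. \<forall>n\<ge>N. nrm (hyers_seq \<phi> m x - hyers_seq \<phi> n x) < e"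
  proof (intro exI allI impI)
    fix m n assume "N \<le> m" "N \<le> n"
    then show "nrm (hyers_seq \<phi> m x - hyers_seq \<phi> n x) < e"
      using close[of m n] close[of n m] nrm_minus_commute[of "hyers_seq \<phi> m x"] by fastforce
  qed
qed

lemma hyers_limit_tendsto: "(\<lambda>n. nrm (hyers_seq \<phi> n x - hyers_limit \<phi> x)) \<longlonglongrightarrow> 0"
  unfolding hyers_limit_def using nrm_complete[OF hyers_seq_Cauchy] by (rule someI_ex)

lemma hyers_limit_approx: "nrm (\<phi> x - hyers_limit \<phi> x) \<le> \<delta> / (q - 1)"
proof (rule le_of_le_add_null_seq[OF _ hyers_limit_tendsto])
  fix n
  show "nrm (\<phi> x - hyers_limit \<phi> x) \<le> \<delta> / (q - 1) + nrm (hyers_seq \<phi> n x - hyers_limit \<phi> x)"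
    using nrm_triangle_diff[of "\<phi> x" "hyers_limit \<phi> x" "hyers_seq \<phi> n x"]
      hyers_seq_dist[of 0 n x] by simp
qed

lemma hyers_limit_quadratic:
  assumes defect: "\<And>x y. nrm (\<phi> (x + y) + \<phi> (x - y) - smul 2 (\<phi> x) - smul 2 (\<phi> y)) \<le> K"
  shows "quadratic_map smul (hyers_limit \<phi>)"
  unfolding quadratic_map_def
proof (intro allI)
  fix x y
  let ?a = "hyers_seq \<phi>" and ?h = "hyers_limit \<phi>"
  let ?err = "\<lambda>z n. nrm (?a n z - ?h z)"
  define t where "t n = K / q ^ n + ?err (x + y) n + ?err (x - y) n
      + 2 powr \<beta> * ?err x n + 2 powr \<beta> * ?err y n" for n
  have "nrm (?h (x + y) + ?h (x - y) - smul 2 (?h x) - smul 2 (?h y)) \<le> t n" for n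
  proof -
    have triangle5: "nrm (u1 + u2 + u3 + u4 + u5) \<le> nrm u1 + nrm u2 + nrm u3 + nrm u4 + nrm u5"
      for u1 u2 u3 u4 u5
      using nrm_triangle[of "u1 + u2 + u3 + u4" u5] nrm_triangle[of "u1 + u2 + u3" u4]
        nrm_triangle[of "u1 + u2" u3] nrm_triangle[of u1 u2] by linarith
    let ?A = "?a n (x + y) + ?a n (x - y) - smul 2 (?a n x) - smul 2 (?a n y)"
    have "?A = smul (1 / 4 ^ n) (\<phi> ((2 ^ n) *\<^sub>R x + (2 ^ n) *\<^sub>R y) + \<phi> ((2 ^ n) *\<^sub>R x - (2 ^ n) *\<^sub>R y)
        - smul 2 (\<phi> ((2 ^ n) *\<^sub>R x)) - smul 2 (\<phi> ((2 ^ n) *\<^sub>R y)))"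
      unfolding hyers_seq_def
      by (simp only: scaleR_add_right scaleR_diff_right smul_two M.scale_right_diff_distrib
          M.scale_right_distrib)
    then have A: "nrm ?A \<le> K / q ^ n"
      using defect q_gt_1 by (simp add: nrm_smul_inverse_pow4 divide_right_mono)
    let ?d1 = "?h (x + y) - ?a n (x + y)" and ?d2 = "?h (x - y) - ?a n (x - y)"
      and ?d3 = "smul 2 (?a n x - ?h x)" and ?d4 = "smul 2 (?a n y - ?h y)"
    have split: "?h (x + y) + ?h (x - y) - smul 2 (?h x) - smul 2 (?h y) = ?A + ?d1 + ?d2 + ?d3 + ?d4"
      by (simp add: M.scale_right_diff_distrib algebra_simps)
    have "nrm (?h (x + y) + ?h (x - y) - smul 2 (?h x) - smul 2 (?h y))
        \<le> nrm ?A + nrm ?d1 + nrm ?d2 + nrm ?d3 + nrm ?d4"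
      unfolding split by (rule triangle5)
    also have "\<dots> \<le> t n"
      using A nrm_minus_commute[of "?h (x + y)"] nrm_minus_commute[of "?h (x - y)"]
      unfolding t_def nrm_smul by simp
    finally show ?thesis .
  qed
  moreover have "t \<longlonglongrightarrow> 0"
    unfolding t_def
    by (intro tendsto_add_zero tendsto_mult_right_zero divide_q_pow_tendsto_0 hyers_limit_tendsto)
  ultimately have "?h (x + y) + ?h (x - y) - smul 2 (?h x) - smul 2 (?h y) = 0"
    by (rule eq_zero_if_nrm_le_null_seq)
  then show "?h (x + y) + ?h (x - y) = smul 2 (?h x) + smul 2 (?h y)"
    by (simp add: diff_diff_eq)
qed

end

subsection \<open>Consequences of the three-variable inequality\<close>

context
  fixes \<phi> :: "'a::real_vector \<Rightarrow> 'b" and \<epsilon> :: real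
  assumes phi_0: "\<phi> 0 = 0"
    and ineq: "\<And>x y z. nrm (\<phi> (x + y - z) + \<phi> (x + z - y) + \<phi> (y + z - x)
                     - \<phi> (x - y) - \<phi> (x - z) - \<phi> (z - y) - \<phi> x - \<phi> y - \<phi> z) \<le> \<epsilon>"
begin

lemma doubling_defect_le: "nrm (\<phi> (2 *\<^sub>R x) - smul 4 (\<phi> x)) \<le> \<epsilon>"
  using ineq[of x 0 x] by (simp add: phi_0 smul_four scaleR_2 algebra_simps)

lemma quadratic_defect_le:
  "nrm (\<phi> (x + y) + \<phi> (x - y) - smul 2 (\<phi> x) - smul 2 (\<phi> y)) \<le> 3 * \<epsilon>"
proof -
  define E where "E x y z = \<phi> (x + y - z) + \<phi> (x + z - y) + \<phi> (y + z - x)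
                     - \<phi> (x - y) - \<phi> (x - z) - \<phi> (z - y) - \<phi> x - \<phi> y - \<phi> z" for x y z
  have split: "\<phi> (x + y) + \<phi> (x - y) - smul 2 (\<phi> x) - smul 2 (\<phi> y)
      = E x y 0 + - E (x - y) 0 0 + E y 0 0"
    unfolding E_def by (simp add: phi_0 smul_two algebra_simps)
  have "nrm (\<phi> (x + y) + \<phi> (x - y) - smul 2 (\<phi> x) - smul 2 (\<phi> y))
      \<le> nrm (E x y 0) + nrm (E (x - y) 0 0) + nrm (E y 0 0)"
    unfolding split
    using nrm_triangle[of "E x y 0 + - E (x - y) 0 0" "E y 0 0"]
      nrm_triangle[of "E x y 0" "- E (x - y) 0 0"] nrm_minus[of "E (x - y) 0 0"] by linarith
  also have "\<dots> \<le> 3 * \<epsilon>"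
    using ineq[of x y 0] ineq[of "x - y" 0 0] ineq[of y 0 0] unfolding E_def by simp
  finally show ?thesis .
qed

end

end

theorem corollary4p2:
  fixes smul :: "complex \<Rightarrow> 'b::ab_group_add \<Rightarrow> 'b"
    and nrm :: "'b \<Rightarrow> real"
    and \<phi> :: "'a::real_vector \<Rightarrow> 'b"
    and \<beta> \<epsilon> :: real
  assumes "0 < \<beta>" and "\<beta> \<le> 1"
    and "beta_homogeneous_Banach \<beta> smul nrm"
    and "\<epsilon> > 0"
    and "\<phi> 0 = 0"
    and "\<And>x y z. nrm (\<phi> (x + y - z) + \<phi> (x + z - y) + \<phi> (y + z - x)
                     - \<phi> (x - y) - \<phi> (x - z) - \<phi> (z - y) - \<phi> x - \<phi> y - \<phi> z) \<le> \<epsilon>"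
  shows "\<exists>!h. quadratic_map smul h \<and> (\<forall>x. nrm (\<phi> x - h x) \<le> \<epsilon> / (4 powr \<beta> - 1))"
proof -
  interpret beta_Banach smul nrm \<beta> using assms(1,3) by unfold_locales
  let ?h = "hyers_limit \<phi>" and ?B = "\<epsilon> / (4 powr \<beta> - 1)"
  note doubling = doubling_defect_le[OF assms(5,6)]
  have quadratic: "quadratic_map smul ?h"
    using hyers_limit_quadratic[where \<phi> = \<phi>, OF doubling quadratic_defect_le[OF assms(5,6)]] .
  have close: "nrm (\<phi> x - ?h x) \<le> ?B" for x
    using hyers_limit_approx[where \<phi> = \<phi>, OF doubling] unfolding q_def .
  show ?thesis
  proof (rule ex1I[of _ ?h])
    fix g assume "quadratic_map smul g \<and> (\<forall>x. nrm (\<phi> x - g x) \<le> ?B)"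
    then have g: "quadratic_map smul g" "nrm (\<phi> x - g x) \<le> ?B" for x
      by blast+
    have "nrm (g x - ?h x) \<le> 2 * ?B" for x
      using nrm_triangle_diff[of "g x" "?h x" "\<phi> x"] nrm_minus_commute[of "g x" "\<phi> x"]
        g(2)[of x] close[of x] by linarith
    then show "g = ?h"
      by (rule quadratic_map_bounded_diff_eq[OF g(1) quadratic])
  qed (use quadratic close in blast)
qed

end
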